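(* Let $\mathcal{A}$ be a finite alphabet and let $\Theta:\mathcal{A}^*\to\mathcal{A}^*$ be an involutive antimorphism. Let $\mathbf{u}\in\mathcal{A}^{\mathbb{N}}$ be a uniformly recurrent infinite word such that $D_{\Theta}(\mathbf{u})<+\infty$. Then there exist a finite alphabet $\mathcal{B}$, a morphism $\varphi:\mathcal{B}^*\to\mathcal{A}^*$ and a uniformly recurrent infinite word $\mathbf{v}\in\mathcal{B}^{\mathbb{N}}$ such that $\mathbf{u}=\varphi(\mathbf{v})$ and $\mathbf{v}$ is $\Theta_0$-rich, where $\Theta_0$ denotes the reversal mapping on $\mathcal{B}^*$.
   Context: An involutive antimorphism on $\mathcal{A}^*$ is a map $\Theta:\mathcal{A}^*\to\mathcal{A}^*$ with $\Theta^2=\mathrm{Id}$ and $\Theta(uv)=\Theta(v)\Theta(u)$ for all $u,v$. The reversal mapping $\Theta_0$ sends $w_1w_2\cdots w_n$ to $w_nw_{n-1}\cdots w_1$. A word $w$ is a $\Theta$-palindrome if $\Theta(w)=w$ (the empty word is one). For a finite word $w$, $\mathrm{Pal}_\Theta(w)$ is the set of distinct $\Theta$-palindromes occurring as factors of $w$ (including the empty word), and $G_\Theta(w)$ is the number of sets $\{a,\Theta(a)\}$ where $a$ is a letter occurring in $w$ with $a\neq\Theta(a)$. The $\Theta$-palindromic defect of a finite word $w$ is $D_\Theta(w)=|w|+1-G_\Theta(w)-\#\mathrm{Pal}_\Theta(w)$, and for an infinite word $\mathbf{u}$, $D_\Theta(\mathbf{u})=\sup\{D_\Theta(w): w \text{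 a factor of } \mathbf{u}\}$. A finite word $w$ is $\Theta$-rich if $D_\Theta(w)=0$; an infinite word is $\Theta$-rich if all its factors are $\Theta$-rich (for $\Theta_0$ this is the usual notion of a rich word: each factor $w$ contains $|w|+1$ distinct palindromes). An infinite word is recurrent if every factor occurs infinitely often; it is uniformly recurrent if it is recurrent and every factor $w$ has only finitely many return words, i.e. finitely many factors $q$ such that $qw$ has $w$ as prefix and suffix and contains exactly two occurrences of $w$. *)

theory Defs
  imports Main "HOL-Library.Sublist"
begin

definition invol_antimorphism :: "('a list \<Rightarrow> 'a list) \<Rightarrow> bool" where
  "invol_antimorphism \<Theta> \<longleftrightarrow> (\<forall>w. \<Theta> (\<Theta> w) = w) \<and> (\<forall>x y. \<Theta> (x @ y) = \<Theta> y @ \<Theta> x)"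

definition inf_factor_at :: "(nat \<Rightarrow> 'a) \<Rightarrow> nat \<Rightarrow> nat \<Rightarrow> 'a list" where
  "inf_factor_at u i n = map u [i..<i+n]"

definition is_inf_factor :: "(nat \<Rightarrow> 'a) \<Rightarrow> 'a list \<Rightarrow> bool" where
  "is_inf_factor u w \<longleftrightarrow> (\<exists>i. inf_factor_at u i (length w) = w)"

definition Pal :: "('a list \<Rightarrow> 'a list) \<Rightarrow> 'a list \<Rightarrow> 'a list set" where
  "Pal \<Theta> w = {p. sublist p w \<and> \<Theta> p = p}"

definition G :: "('a list \<Rightarrow> 'a list) \<Rightarrow> 'a list \<Rightarrow> nat" where
  "G \<Theta> w = card {{[a], \<Theta> [a]} | a. a \<in> set w \<and> \<Theta> [a] \<noteq> [a]}"

definition defect :: "('a list \<Rightarrow> 'a list) \<Rightarrow> 'a list \<Rightarrow> int" where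
  "defect \<Theta> w = int (length w) + 1 - int (G \<Theta> w) - int (card (Pal \<Theta> w))"

definition finite_defect :: "('a list \<Rightarrow> 'a list) \<Rightarrow> (nat \<Rightarrow> 'a) \<Rightarrow> bool" where
  "finite_defect \<Theta> u \<longleftrightarrow> (\<exists>K::int. \<forall>w. is_inf_factor u w \<longrightarrow> defect \<Theta> w \<le> K)"

definition rich :: "(nat \<Rightarrow> 'a) \<Rightarrow> bool" where
  "rich v \<longleftrightarrow> (\<forall>w. is_inf_factor v w \<longrightarrow> defect rev w = 0)"

definition recurrent :: "(nat \<Rightarrow> 'a) \<Rightarrow> bool" where
  "recurrent u \<longleftrightarrow> (\<forall>w. is_inf_factor u w \<longrightarrow> infinite {i. inf_factor_at u i (length w) = w})"

definition occ_count :: "'a list \<Rightarrow> 'a list \<Rightarrow> nat" where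
  "occ_count w x = card {i. i + length w \<le> length x \<and> take (length w) (drop i x) = w}"

definition return_words :: "(nat \<Rightarrow> 'a) \<Rightarrow> 'a list \<Rightarrow> 'a list set" where
  "return_words u w = {q. is_inf_factor u (q @ w) \<and> prefix w (q @ w) \<and> suffix w (q @ w)
                          \<and> occ_count w (q @ w) = 2}"

definition uniformly_recurrent :: "(nat \<Rightarrow> 'a) \<Rightarrow> bool" where
  "uniformly_recurrent u \<longleftrightarrow> recurrent u \<and>
     (\<forall>w. is_inf_factor u w \<longrightarrow> finite (return_words u w))"

(* u = phi(v) for the morphism with letter images phi: u is the infinite concatenation
   phi(v 0) phi(v 1) phi(v 2) ... *)
definition morph_prefix :: "('b \<Rightarrow> 'a list) \<Rightarrow> (nat \<Rightarrow> 'b) \<Rightarrow> nat \<Rightarrow> 'a list" where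
  "morph_prefix \<phi> v n = concat (map (\<phi> \<circ> v) [0..<n])"

definition is_morph_image :: "('b \<Rightarrow> 'a list) \<Rightarrow> (nat \<Rightarrow> 'b) \<Rightarrow> (nat \<Rightarrow> 'a) \<Rightarrow> bool" where
  "is_morph_image \<phi> v u \<longleftrightarrow>
     (\<forall>n. inf_factor_at u 0 (length (morph_prefix \<phi> v n)) = morph_prefix \<phi> v n) \<and>
     (\<forall>N. \<exists>n. length (morph_prefix \<phi> v n) \<ge> N)"

end

theory Submission
  imports Defs "HOL-Library.Infinite_Set" "HOL-Library.Countable"
begin

text \<open>
  For uniformly recurrent \<open>u\<close> of finite \<open>\<Theta>\<close>-defect the defect is attained on some factor,
  hence on every long factor, since defect is monotone under taking factors.  Appending a
  letter to a long factor therefore keeps the defect and forces a new \<open>\<Theta>\<close>-palindromic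
  suffix, and it follows that every complete return word to a long \<open>\<Theta>\<close>-palindrome is a
  \<open>\<Theta>\<close>-palindrome.  Choose such a palindrome \<open>w\<close> that is a left extension of \<open>u\<close> and code
  \<open>w u\<close> by the sequence \<open>v\<close> of its successive return words to \<open>w\<close>.  A complete return word
  to a palindrome in \<open>v\<close> expands to a complete return word to a long \<open>\<Theta>\<close>-palindrome in
  \<open>u\<close>, which is a \<open>\<Theta>\<close>-palindrome, so, the coding being injective, it was a palindrome;
  this property of complete returns characterises richness.  Uniform recurrence passes to
  \<open>v\<close> because occurrences of factors of \<open>u\<close> have bounded gaps.
\<close>

section \<open>Involutive antimorphisms and the palindromic defect\<close>

definition antimorph :: "('a \<Rightarrow> 'a) \<Rightarrow> 'a list \<Rightarrow> 'a list" where
  "antimorph \<theta> w = rev (map \<theta> w)"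

lemma invol_antimorphism_eq_antimorph:
  assumes "invol_antimorphism \<Theta>"
  shows "\<exists>\<theta>. (\<forall>a. \<theta> (\<theta> a) = a) \<and> \<Theta> = antimorph \<theta>"
proof -
  have inv: "\<And>w. \<Theta> (\<Theta> w) = w" and app: "\<And>x y. \<Theta> (x @ y) = \<Theta> y @ \<Theta> x"
    using assms unfolding invol_antimorphism_def by auto
  have Nil: "\<Theta> [] = []"
    using app[of "[]" "[]"] by (metis append_self_conv2 append_same_eq)
  have length_le: "length w \<le> length (\<Theta> w)" for w
  proof (induction w)
    case (Cons a w)
    have "\<Theta> [a] \<noteq> []" using inv[of "[a]"] Nil by auto
    then show ?case using Cons app[of "[a]" w] by (cases "\<Theta> [a]") auto
  qed simp
  have length_1: "length (\<Theta> [a]) = 1" for a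
    using length_le[of "\<Theta> [a]"] length_le[of "[a]"] inv[of "[a]"] by simp
  have singleton: "\<Theta> [a] = [hd (\<Theta> [a])]" for a
    using length_1[of a] by (cases "\<Theta> [a]") auto
  define \<theta> where "\<theta> a = hd (\<Theta> [a])" for a
  have "\<Theta> w = antimorph \<theta> w" for w
  proof (induction w)
    case (Cons a w)
    then show ?case
      using app[of "[a]" w] singleton[of a] by (simp add: antimorph_def \<theta>_def)
  qed (simp add: Nil antimorph_def)
  moreover have "\<theta> (\<theta> a) = a" for a
    using inv[of "[a]"] singleton by (metis \<theta>_def list.sel(1))
  ultimately show ?thesis by blast
qed

locale involution =
  fixes \<theta> :: "'a \<Rightarrow> 'a"
  assumes involution[simp]: "\<theta> (\<theta> a) = a"
begin

abbreviation "\<Theta> \<equiv> antimorph \<theta>"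

lemma antimorph_append[simp]: "\<Theta> (x @ y) = \<Theta> y @ \<Theta> x" by (simp add: antimorph_def)
lemma antimorph_antimorph[simp]: "\<Theta> (\<Theta> x) = x" by (simp add: antimorph_def rev_map comp_def)
lemma length_antimorph[simp]: "length (\<Theta> x) = length x" by (simp add: antimorph_def)
lemma antimorph_singleton[simp]: "\<Theta> [a] = [\<theta> a]" by (simp add: antimorph_def)
lemma antimorph_Cons: "\<Theta> (a # x) = \<Theta> x @ [\<theta> a]" by (simp add: antimorph_def)

lemma sublist_antimorph_iff: "sublist (\<Theta> x) (\<Theta> y) \<longleftrightarrow> sublist x y"
  by (metis antimorph_antimorph antimorph_def map_mono_sublist sublist_rev)

lemma Pal_antimorph: "Pal \<Theta> (\<Theta> w) = Pal \<Theta> w"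
  unfolding Pal_def by (metis sublist_antimorph_iff)

lemma finite_Pal: "finite (Pal \<Theta> w)"
  by (rule finite_subset[of _ "set (sublists w)"]) (auto simp: Pal_def)

lemma Pal_mono: "sublist x y \<Longrightarrow> Pal \<Theta> x \<subseteq> Pal \<Theta> y"
  unfolding Pal_def using sublist_order.order_trans by blast

definition letter_pairs :: "'a list \<Rightarrow> 'a list set set" where
  "letter_pairs w = (\<lambda>a. {[a], [\<theta> a]}) ` {a \<in> set w. \<theta> a \<noteq> a}"

lemma G_eq_card_letter_pairs: "G \<Theta> w = card (letter_pairs w)"
  unfolding G_def letter_pairs_def by (auto intro!: arg_cong[where f = card])

lemma letter_pairs_antimorph: "letter_pairs (\<Theta> w) = letter_pairs w"
proof -
  have "{a \<in> set (\<Theta> w). \<theta> a \<noteq> a} = \<theta> ` {a \<in> set w. \<theta> a \<noteq> a}"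
    by (auto simp: antimorph_def)
  then show ?thesis unfolding letter_pairs_def by (simp add: image_image insert_commute)
qed

lemma letter_pairs_snoc:
  "letter_pairs (w @ [a]) = letter_pairs w \<union> (if \<theta> a \<noteq> a then {{[a], [\<theta> a]}} else {})"
  unfolding letter_pairs_def by auto

lemma finite_letter_pairs: "finite (letter_pairs w)"
  unfolding letter_pairs_def by simp

lemma defect_antimorph: "defect \<Theta> (\<Theta> w) = defect \<Theta> w"
  unfolding defect_def by (simp add: G_eq_card_letter_pairs letter_pairs_antimorph Pal_antimorph)

lemma palindromic_suffix_imp_prefix:
  assumes "suffix q p" "\<Theta> q = q" "\<Theta> p = p"
  shows "prefix q p"
proof -
  obtain s where "p = s @ q" using assms(1) by (auto simp: suffix_def)
  then have "p = q @ \<Theta> s" using assms by (metis antimorph_append)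
  then show ?thesis by simp
qed

lemma Pal_subset_Pal_snoc: "Pal \<Theta> w \<subseteq> Pal \<Theta> (w @ [a])"
  by (rule Pal_mono) auto

lemma Pal_snoc_new_iff:
  "q \<in> Pal \<Theta> (w @ [a]) - Pal \<Theta> w \<longleftrightarrow> suffix q (w @ [a]) \<and> \<Theta> q = q \<and> \<not> sublist q w"
  unfolding Pal_def by (auto simp: sublist_snoc)

text \<open>A longer new palindromic suffix would contain the shorter one also as a prefix,
  hence as a factor of \<open>w\<close>.\<close>
lemma Pal_snoc_new_unique:
  assumes "q1 \<in> Pal \<Theta> (w @ [a]) - Pal \<Theta> w" "q2 \<in> Pal \<Theta> (w @ [a]) - Pal \<Theta> w"
  shows "q1 = q2"
proof -
  have shorter_eq: "x = y"
    if x: "suffix x (w @ [a])" "\<Theta> x = x" "\<not> sublist x w"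
      and y: "suffix y (w @ [a])" "\<Theta> y = y" "length x \<le> length y" for x y
  proof (rule ccontr)
    assume "x \<noteq> y"
    have "prefix x y"
      using palindromic_suffix_imp_prefix suffix_length_suffix x y by blast
    with \<open>x \<noteq> y\<close> obtain t where yt: "y = x @ t" "t \<noteq> []" by (auto simp: prefix_def)
    obtain p where "w @ [a] = p @ x @ t" using y(1) yt by (auto simp: suffix_def)
    then have "w = p @ x @ butlast t" using \<open>t \<noteq> []\<close>
      by (metis append_assoc butlast_append butlast_snoc)
    then show False using x(3) by auto
  qed
  show ?thesis
    using assms shorter_eq[of q1 q2] shorter_eq[of q2 q1]
    unfolding Pal_snoc_new_iff by (cases "length q1 \<le> length q2") auto
qed

lemma card_Pal_snoc_le: "card (Pal \<Theta> (w @ [a])) \<le> card (Pal \<Theta> w) + 1"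
proof (cases "Pal \<Theta> (w @ [a]) \<subseteq> Pal \<Theta> w")
  case True
  then show ?thesis using card_mono[OF finite_Pal True] by simp
next
  case False
  then obtain q where q: "q \<in> Pal \<Theta> (w @ [a]) - Pal \<Theta> w" by auto
  have "Pal \<Theta> (w @ [a]) \<subseteq> insert q (Pal \<Theta> w)"
    using Pal_snoc_new_unique[OF q] by auto
  then have "card (Pal \<Theta> (w @ [a])) \<le> card (insert q (Pal \<Theta> w))"
    by (rule card_mono[rotated]) (simp add: finite_Pal)
  also have "\<dots> \<le> card (Pal \<Theta> w) + 1" by (simp add: finite_Pal card_insert_le_m1)
  finally show ?thesis .
qed

lemma card_Pal_snoc_new:
  assumes "q \<in> Pal \<Theta> (w @ [a]) - Pal \<Theta> w"
  shows "card (Pal \<Theta> (w @ [a])) = card (Pal \<Theta> w) + 1"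
proof -
  have "insert q (Pal \<Theta> w) \<subseteq> Pal \<Theta> (w @ [a])" using assms Pal_subset_Pal_snoc by auto
  then have "card (insert q (Pal \<Theta> w)) \<le> card (Pal \<Theta> (w @ [a]))"
    by (rule card_mono[rotated]) (simp add: finite_Pal)
  then have "card (Pal \<Theta> w) + 1 \<le> card (Pal \<Theta> (w @ [a]))"
    using assms by (simp add: finite_Pal)
  then show ?thesis using card_Pal_snoc_le[of w a] by simp
qed

text \<open>A new letter pair and a new palindrome cannot appear together: a new
  palindromic suffix of length at least two starts with \<open>\<theta> a\<close>, so the pair of \<open>a\<close>
  already occurs in \<open>w\<close>.\<close>
lemma letter_pairs_snoc_new_imp_Pal_snoc_eq:
  assumes "letter_pairs (w @ [a]) \<noteq> letter_pairs w"
  shows "Pal \<Theta> (w @ [a]) = Pal \<Theta> w"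
proof (rule ccontr)
  assume "Pal \<Theta> (w @ [a]) \<noteq> Pal \<Theta> w"
  then obtain q where "q \<in> Pal \<Theta> (w @ [a]) - Pal \<Theta> w" using Pal_subset_Pal_snoc by blast
  then have suf: "suffix q (w @ [a])" and pal: "\<Theta> q = q" and new: "\<not> sublist q w"
    unfolding Pal_snoc_new_iff by auto
  have new_pair: "\<theta> a \<noteq> a" "{[a], [\<theta> a]} \<notin> letter_pairs w"
    using assms by (auto simp: letter_pairs_snoc split: if_splits)
  have "q \<noteq> []" using new by auto
  then obtain b q' where q: "q = b # q'" by (cases q) auto
  have "q' \<noteq> []"
  proof
    assume "q' = []"
    then have "q = [a]" using suf q by (auto simp: suffix_def)
    then show False using pal new_pair(1) by simp
  qed
  have "last q = a" using suf \<open>q \<noteq> []\<close> by (auto simp: suffix_def) (metis last_appendR last_snoc)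
  moreover have "\<Theta> q = \<Theta> q' @ [\<theta> b]" using q by (simp add: antimorph_Cons)
  ultimately have b: "\<theta> b = a" using pal by (metis last_snoc)
  obtain p where "w @ [a] = p @ b # q'" using suf q by (auto simp: suffix_def)
  then have "butlast (w @ [a]) = butlast (p @ b # q')" by simp
  then have "w = p @ b # butlast q'" using \<open>q' \<noteq> []\<close> by (simp add: butlast_append)
  then have "{[b], [\<theta> b]} \<in> letter_pairs w"
    using b new_pair(1) unfolding letter_pairs_def by auto
  moreover have "{[b], [\<theta> b]} = {[a], [\<theta> a]}" using b by auto
  ultimately show False using new_pair(2) by simp
qed

lemma defect_le_defect_snoc: "defect \<Theta> w \<le> defect \<Theta> (w @ [a])"
proof (cases "letter_pairs (w @ [a]) = letter_pairs w")
  case True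
  then show ?thesis
    using card_Pal_snoc_le[of w a] unfolding defect_def G_eq_card_letter_pairs by simp
next
  case False
  have "card (letter_pairs (w @ [a])) \<le> card (letter_pairs w) + 1"
    by (simp add: letter_pairs_snoc finite_letter_pairs card_insert_le_m1)
  then show ?thesis
    using letter_pairs_snoc_new_imp_Pal_snoc_eq[OF False]
    unfolding defect_def G_eq_card_letter_pairs by simp
qed

lemma defect_le_defect_Cons: "defect \<Theta> w \<le> defect \<Theta> (a # w)"
proof -
  have "defect \<Theta> w = defect \<Theta> (\<Theta> w)" by (simp add: defect_antimorph)
  also have "\<dots> \<le> defect \<Theta> (\<Theta> w @ [\<theta> a])" by (rule defect_le_defect_snoc)
  also have "\<Theta> w @ [\<theta> a] = \<Theta> (a # w)" by (simp add: antimorph_Cons)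
  finally show ?thesis by (simp add: defect_antimorph)
qed

lemma defect_mono: "sublist x y \<Longrightarrow> defect \<Theta> x \<le> defect \<Theta> y"
proof -
  have right: "defect \<Theta> w \<le> defect \<Theta> (w @ s)" for w s
  proof (induction s rule: rev_induct)
    case (snoc b s)
    then show ?case using defect_le_defect_snoc[of "w @ s" b] by simp
  qed simp
  have left: "defect \<Theta> w \<le> defect \<Theta> (p @ w)" for w p
  proof (induction p)
    case (Cons b p)
    then show ?case using defect_le_defect_Cons[of "p @ w" b] by simp
  qed simp
  show "sublist x y \<Longrightarrow> ?thesis"
    unfolding sublist_def using order_trans[OF right left] by auto
qed

lemma defect_snoc_eq_imp_new_palindromic_suffix:
  assumes "defect \<Theta> (w @ [a]) = defect \<Theta> w" "a \<in> set w"
  shows "\<exists>q. suffix q (w @ [a]) \<and> \<Theta> q = q \<and> \<not> sublist q w"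
proof -
  have "letter_pairs (w @ [a]) = letter_pairs w"
    using assms(2) unfolding letter_pairs_def by (simp add: insert_absorb)
  then have "card (Pal \<Theta> w) < card (Pal \<Theta> (w @ [a]))"
    using assms(1) unfolding defect_def G_eq_card_letter_pairs by simp
  then have "\<not> Pal \<Theta> (w @ [a]) \<subseteq> Pal \<Theta> w"
    using card_mono[OF finite_Pal[of w], of "Pal \<Theta> (w @ [a])"] by linarith
  then obtain q where "q \<in> Pal \<Theta> (w @ [a]) - Pal \<Theta> w" by blast
  then show ?thesis unfolding Pal_snoc_new_iff by blast
qed

end

section \<open>Factors, syndeticity and uniform recurrence\<close>

definition occurs_at :: "(nat \<Rightarrow> 'a) \<Rightarrow> 'a list \<Rightarrow> nat \<Rightarrow> bool" where
  "occurs_at u F i \<longleftrightarrow> inf_factor_at u i (length F) = F"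

lemma length_inf_factor_at[simp]: "length (inf_factor_at u i n) = n"
  by (simp add: inf_factor_at_def)

lemma nth_inf_factor_at[simp]: "k < n \<Longrightarrow> inf_factor_at u i n ! k = u (i + k)"
  by (simp add: inf_factor_at_def)

lemma inf_factor_at_0[simp]: "inf_factor_at u i 0 = []"
  by (simp add: inf_factor_at_def)

lemma inf_factor_at_add:
  "inf_factor_at u i (m + n) = inf_factor_at u i m @ inf_factor_at u (i + m) n"
  by (rule nth_equalityI) (auto simp: nth_append)

lemma inf_factor_at_Cons: "inf_factor_at u i (Suc n) = u i # inf_factor_at u (Suc i) n"
  using inf_factor_at_add[of u i 1 n] by (simp add: inf_factor_at_def)

lemma take_drop_inf_factor_at:
  "k + m \<le> n \<Longrightarrow> take m (drop k (inf_factor_at u i n)) = inf_factor_at u (i + k) m"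
  by (rule nth_equalityI) (auto simp: add.assoc)

lemma take_inf_factor_at: "m \<le> n \<Longrightarrow> take m (inf_factor_at u i n) = inf_factor_at u i m"
  using take_drop_inf_factor_at[of 0 m n u i] by simp

lemma prefix_inf_factor_at:
  assumes "prefix p (inf_factor_at u i n)"
  shows "p = inf_factor_at u i (length p)"
proof -
  have "p = take (length p) (inf_factor_at u i n)" using assms by (auto simp: prefix_def)
  then show ?thesis using prefix_length_le[OF assms] by (simp add: take_inf_factor_at)
qed

lemma suffix_inf_factor_at:
  assumes "suffix p (inf_factor_at u i n)"
  shows "p = inf_factor_at u (i + (n - length p)) (length p)"
proof -
  obtain zs where zs: "inf_factor_at u i n = zs @ p" using assms by (auto simp: suffix_def)
  then have "length zs = n - length p" by (metis length_append length_inf_factor_at add_diff_cancel_right')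
  then have "p = drop (n - length p) (inf_factor_at u i n)" using zs by simp
  also have "\<dots> = take (length p) (drop (n - length p) (inf_factor_at u i n))"
    using suffix_length_le[OF assms] by simp
  also have "\<dots> = inf_factor_at u (i + (n - length p)) (length p)"
    using suffix_length_le[OF assms] by (intro take_drop_inf_factor_at) simp
  finally show ?thesis .
qed

lemma inf_factor_at_cong:
  "(\<And>d. d < n \<Longrightarrow> f (a + d) = f (b + d)) \<Longrightarrow> inf_factor_at f a n = inf_factor_at f b n"
  by (rule nth_equalityI) auto

lemma sublist_inf_factor_at:
  assumes "i \<le> j" "j + m \<le> i + n"
  shows "sublist (inf_factor_at u j m) (inf_factor_at u i n)"
proof -
  have "inf_factor_at u j m = take m (drop (j - i) (inf_factor_at u i n))"
    using take_drop_inf_factor_at[of "j - i" m n u i] assms by simp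
  then show ?thesis by (metis sublist_order.order.trans sublist_take sublist_drop)
qed

lemma occurs_at_iff: "occurs_at u F j \<longleftrightarrow> (\<forall>k<length F. u (j + k) = F ! k)"
  unfolding occurs_at_def by (auto simp: list_eq_iff_nth_eq)

lemma is_inf_factor_inf_factor_at[simp]: "is_inf_factor u (inf_factor_at u i n)"
  unfolding is_inf_factor_def by (metis length_inf_factor_at)

lemma is_inf_factor_sublist:
  assumes "is_inf_factor u z" "sublist y z"
  shows "is_inf_factor u y"
proof -
  obtain p s where z: "z = p @ y @ s" using assms(2) by (auto simp: sublist_def)
  obtain i where i: "inf_factor_at u i (length z) = z"
    using assms(1) unfolding is_inf_factor_def by blast
  have "y = take (length y) (drop (length p) z)" using z by simp
  also have "\<dots> = inf_factor_at u (i + length p) (length y)"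
    using take_drop_inf_factor_at[of "length p" "length y" "length z" u i] z i by simp
  finally show ?thesis unfolding is_inf_factor_def by metis
qed

definition syndetic :: "(nat \<Rightarrow> 'a) \<Rightarrow> 'a list \<Rightarrow> bool" where
  "syndetic u F \<longleftrightarrow> (\<exists>R. \<forall>i. \<exists>j. i \<le> j \<and> j \<le> i + R \<and> occurs_at u F j)"

lemma consecutive_occurrences_return_word:
  assumes "occurs_at u F j" "occurs_at u F (j + d)" "0 < d"
    and "\<And>k. 0 < k \<Longrightarrow> k < d \<Longrightarrow> \<not> occurs_at u F (j + k)"
  shows "inf_factor_at u j d \<in> return_words u F"
proof -
  define q where "q = inf_factor_at u j d"
  have qF: "q @ F = inf_factor_at u j (d + length F)"
    using assms(2) unfolding q_def occurs_at_def by (simp add: inf_factor_at_add)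
  have occ_iff: "k \<le> d \<Longrightarrow> take (length F) (drop k (q @ F)) = F \<longleftrightarrow> occurs_at u F (j + k)" for k
    unfolding qF occurs_at_def using take_drop_inf_factor_at[of k "length F" "d + length F" u j]
    by simp
  have "take (length F) (q @ F) = F" using occ_iff[of 0] assms(1) by simp
  then have "prefix F (q @ F)" by (metis take_is_prefix)
  moreover have "{i. i + length F \<le> length (q @ F) \<and> take (length F) (drop i (q @ F)) = F} = {0, d}"
  proof (rule set_eqI, rule iffI)
    fix k assume "k \<in> {i. i + length F \<le> length (q @ F) \<and> take (length F) (drop i (q @ F)) = F}"
    then have "k \<le> d" "occurs_at u F (j + k)" using occ_iff by (auto simp: q_def)
    then show "k \<in> {0, d}" using assms(4)[of k] by (cases "k = 0"; cases "k = d") auto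
  next
    fix k assume "k \<in> {0, d}"
    then have "k \<le> d" "occurs_at u F (j + k)" using assms(1,2) by auto
    then show "k \<in> {i. i + length F \<le> length (q @ F) \<and> take (length F) (drop i (q @ F)) = F}"
      using occ_iff[of k] by (simp add: q_def)
  qed
  then have "occ_count F (q @ F) = 2"
    unfolding occ_count_def using assms(3) by simp
  ultimately show ?thesis
    unfolding return_words_def q_def[symmetric] using qF by (simp add: suffix_def)
qed

lemma uniformly_recurrent_imp_syndetic:
  assumes "uniformly_recurrent u" "is_inf_factor u F"
  shows "syndetic u F"
proof -
  define S where "S = {i. occurs_at u F i}"
  have "infinite S"
    using assms unfolding uniformly_recurrent_def recurrent_def S_def occurs_at_def by auto
  define M where "M = Max (length ` return_words u F)"
  have gap: "b \<le> a + M" if "a \<in> S" "b \<in> S" "a < b" "\<And>k. a < k \<Longrightarrow> k < b \<Longrightarrow> k \<notin> S" for a b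
  proof -
    have "inf_factor_at u a (b - a) \<in> return_words u F"
      using consecutive_occurrences_return_word[of u F a "b - a"] that unfolding S_def by auto
    moreover have "finite (return_words u F)"
      using assms unfolding uniformly_recurrent_def by auto
    ultimately have "length (inf_factor_at u a (b - a)) \<le> M"
      unfolding M_def by (rule Max_ge[OF finite_imageI imageI, rotated])
    then have "b - a \<le> M" by simp
    then show ?thesis by simp
  qed
  obtain j0 where j0: "j0 \<in> S" using \<open>infinite S\<close> by (metis finite.emptyI ex_in_conv)
  have "\<exists>j. i \<le> j \<and> j \<le> i + (j0 + M) \<and> j \<in> S" for i
  proof (cases "i < j0")
    case False
    define a where "a = Max {j \<in> S. j \<le> i}"
    have fin: "finite {j \<in> S. j \<le> i}" and ne: "j0 \<in> {j \<in> S. j \<le> i}" using False j0 by auto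
    have a: "a \<in> S" "a \<le> i" using Max_in[OF fin] ne unfolding a_def by blast+
    have a_max: "j \<le> a" if "j \<in> S" "j \<le> i" for j
      using Max_ge[OF fin] that unfolding a_def by blast
    define b where "b = (LEAST b. i < b \<and> b \<in> S)"
    have ex: "\<exists>b. i < b \<and> b \<in> S" using \<open>infinite S\<close> by (simp add: infinite_nat_iff_unbounded)
    have b: "i < b \<and> b \<in> S" unfolding b_def by (rule LeastI_ex[OF ex])
    have b_min: "k \<notin> S" if "i < k" "k < b" for k
      using not_less_Least[of k "\<lambda>b. i < b \<and> b \<in> S"] that unfolding b_def by blast
    have "b \<le> a + M"
    proof (rule gap)
      show "a \<in> S" "b \<in> S" "a < b" using a b by auto
      show "k \<notin> S" if "a < k" "k < b" for k
        using a_max[of k] b_min[of k] that by (cases "k \<le> i") auto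
    qed
    then show ?thesis using a b by (intro exI[of _ b]) auto
  qed (use j0 in \<open>intro exI[of _ j0], auto\<close>)
  then show ?thesis unfolding syndetic_def S_def by blast
qed

lemma syndetic_sublist_long_factor:
  assumes "syndetic u F"
  shows "\<exists>L. \<forall>z. is_inf_factor u z \<and> L \<le> length z \<longrightarrow> sublist F z"
proof -
  obtain R where R: "\<And>i. \<exists>j. i \<le> j \<and> j \<le> i + R \<and> occurs_at u F j"
    using assms unfolding syndetic_def by blast
  have "sublist F z" if z: "is_inf_factor u z" "R + length F \<le> length z" for z
  proof -
    obtain i where i: "inf_factor_at u i (length z) = z"
      using z(1) unfolding is_inf_factor_def by blast
    obtain j where j: "i \<le> j" "j \<le> i + R" "occurs_at u F j" using R by blast
    have "sublist (inf_factor_at u j (length F)) (inf_factor_at u i (length z))"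
      using j z by (intro sublist_inf_factor_at) auto
    then show ?thesis using i j(3) unfolding occurs_at_def by simp
  qed
  then show ?thesis by blast
qed

lemma uniformly_recurrent_sublist_long_factor:
  assumes "uniformly_recurrent u" "finite S" "\<forall>F\<in>S. is_inf_factor u F"
  shows "\<exists>L. \<forall>F\<in>S. \<forall>z. is_inf_factor u z \<and> L \<le> length z \<longrightarrow> sublist F z"
  using assms(2,3)
proof (induction S rule: finite_induct)
  case (insert F S)
  obtain L where "\<forall>F\<in>S. \<forall>z. is_inf_factor u z \<and> L \<le> length z \<longrightarrow> sublist F z"
    using insert by blast
  moreover obtain L' where "\<forall>z. is_inf_factor u z \<and> L' \<le> length z \<longrightarrow> sublist F z"
    using syndetic_sublist_long_factor uniformly_recurrent_imp_syndetic assms(1) insert.prems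
    by blast
  ultimately show ?case by (intro exI[of _ "max L L'"]) auto
qed simp

text \<open>An occurrence of \<open>x\<close> strictly inside a return word would be a third one.\<close>
lemma length_return_word_le:
  assumes R: "\<And>i. \<exists>j. i \<le> j \<and> j \<le> i + R \<and> occurs_at v x j" and q: "q \<in> return_words v x"
  shows "length q \<le> Suc R"
proof (rule ccontr)
  assume long: "\<not> length q \<le> Suc R"
  from q have "is_inf_factor v (q @ x)" "prefix x (q @ x)" "occ_count x (q @ x) = 2"
    unfolding return_words_def by auto
  then obtain i where i: "inf_factor_at v i (length (q @ x)) = q @ x"
    unfolding is_inf_factor_def by blast
  obtain j where j: "Suc i \<le> j" "j \<le> Suc i + R" "occurs_at v x j" using R by blast
  define Occ where
    "Occ = {k. k + length x \<le> length (q @ x) \<and> take (length x) (drop k (q @ x)) = x}"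
  obtain zs where "q @ x = x @ zs" using \<open>prefix x (q @ x)\<close> by (auto simp: prefix_def)
  then have "take (length x) (drop 0 (q @ x)) = x" by (simp only: drop_0) simp
  then have "0 \<in> Occ" "length q \<in> Occ" unfolding Occ_def by simp_all
  moreover have k: "0 < j - i" "j - i < length q" using j long by auto
  then have "take (length x) (drop (j - i) (q @ x)) = inf_factor_at v j (length x)"
    using take_drop_inf_factor_at[of "j - i" "length x" "length (q @ x)" v i] i j by simp
  then have "j - i \<in> Occ" using j(3) k unfolding Occ_def occurs_at_def by simp
  moreover have "finite Occ"
    unfolding Occ_def by (rule finite_subset[of _ "{..length (q @ x)}"]) auto
  ultimately have "card {0, j - i, length q} \<le> card Occ"
    by (intro card_mono) auto
  moreover have "card {0, j - i, length q} = 3" using k by (auto simp: card_insert_if)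
  moreover have "card Occ = 2" using \<open>occ_count x (q @ x) = 2\<close> unfolding occ_count_def Occ_def .
  ultimately show False by simp
qed

lemma syndetic_imp_uniformly_recurrent:
  assumes syndetic: "\<And>x. is_inf_factor v x \<Longrightarrow> syndetic v x" and finite_range: "finite (range v)"
  shows "uniformly_recurrent v"
proof -
  have "infinite {i. inf_factor_at v i (length x) = x}" if x: "is_inf_factor v x" for x
    unfolding infinite_nat_iff_unbounded
  proof
    fix m
    obtain R where "\<And>i. \<exists>j. i \<le> j \<and> j \<le> i + R \<and> occurs_at v x j"
      using syndetic[OF x] unfolding syndetic_def by blast
    then obtain j where "Suc m \<le> j" "occurs_at v x j" by blast
    then show "\<exists>n>m. n \<in> {i. inf_factor_at v i (length x) = x}"
      by (intro exI[of _ j]) (auto simp: occurs_at_def)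
  qed
  moreover have "finite (return_words v x)" if x: "is_inf_factor v x" for x
  proof -
    obtain R where R: "\<And>i. \<exists>j. i \<le> j \<and> j \<le> i + R \<and> occurs_at v x j"
      using syndetic[OF x] unfolding syndetic_def by blast
    have "set q \<subseteq> range v" if q: "q \<in> return_words v x" for q
    proof -
      obtain i where "inf_factor_at v i (length (q @ x)) = q @ x"
        using q unfolding return_words_def is_inf_factor_def by blast
      then have "set (q @ x) \<subseteq> range v" by (metis inf_factor_at_def image_subsetI rangeI set_map)
      then show ?thesis by simp
    qed
    then have "return_words v x \<subseteq> {q. set q \<subseteq> range v \<and> length q \<le> Suc R}"
      using length_return_word_le[OF R] by blast
    then show ?thesis by (rule finite_subset) (rule finite_lists_length_le[OF finite_range])
  qed
  ultimately show ?thesis unfolding uniformly_recurrent_def recurrent_def by blast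
qed

section \<open>Complete return words and richness\<close>

definition complete_return :: "'a list \<Rightarrow> 'a list \<Rightarrow> bool" where
  "complete_return p c \<longleftrightarrow> prefix p c \<and> suffix p c \<and> length p < length c \<and>
     (\<forall>k. 0 < k \<and> k < length c - length p \<longrightarrow> take (length p) (drop k c) \<noteq> p)"

text \<open>The complete return word starts at the last occurrence of \<open>q\<close> before the final one.\<close>
lemma repeated_suffix_imp_complete_return_suffix:
  assumes suf: "suffix q (x @ [a])" and "sublist q x"
  shows "\<exists>c. suffix c (x @ [a]) \<and> complete_return q c"
proof -
  define xa where "xa = x @ [a]"
  define J where "J = {j. j < length xa - length q \<and> take (length q) (drop j xa) = q}"
  obtain ps ss where "x = ps @ q @ ss" using assms(2) by (auto simp: sublist_def)
  then have "length ps \<in> J" unfolding J_def xa_def by simp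
  moreover have "finite J" unfolding J_def by (rule finite_subset[of _ "{..<length xa}"]) auto
  ultimately have js: "Max J \<in> J" and js_max: "\<And>j. j \<in> J \<Longrightarrow> j \<le> Max J"
    using Max_in Max_ge by blast+
  define c where "c = drop (Max J) xa"
  have "complete_return q c"
    unfolding complete_return_def
  proof (intro conjI allI impI)
    have "take (length q) c = q" using js unfolding J_def c_def by simp
    then show "prefix q c" by (metis take_is_prefix)
    show "length q < length c" using js unfolding J_def c_def by simp linarith
    then have "length q \<le> length (drop (Max J) xa)" using c_def by simp
    then show "suffix q c"
      unfolding c_def using suffix_length_suffix[OF suf[folded xa_def] suffix_drop] by blast
  next
    fix k assume k: "0 < k \<and> k < length c - length q"
    show "take (length q) (drop k c) \<noteq> q"
    proof
      assume "take (length q) (drop k c) = q"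
      then have "Max J + k \<in> J" using k unfolding J_def c_def by (simp add: add.commute) linarith
      then show False using js_max[of "Max J + k"] k by simp
    qed
  qed
  then show ?thesis using suffix_drop unfolding c_def xa_def by blast
qed

text \<open>Complete return words to \<open>w\<close>, with the final \<open>w\<close> removed, form a prefix code.\<close>
lemma complete_return_prefix_code:
  assumes "complete_return w (b @ w)" "a \<noteq> []" "length a < length b"
  shows "a @ w @ s \<noteq> b @ w @ r"
proof
  assume "a @ w @ s = b @ w @ r"
  then have "b = a @ drop (length a) b \<and> w @ s = drop (length a) b @ w @ r"
    using assms(3) by (metis append_eq_append_conv_if append_take_drop_id less_imp_le)
  then obtain t where t: "b = a @ t" "w @ s = t @ w @ r" by blast
  have "take (length w) (drop (length a) (b @ w)) = take (length w) (t @ w)" using t by simp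
  also have "\<dots> = take (length w) (t @ w @ r)" by (simp add: take_append)
  also have "\<dots> = w" using t(2) by (metis append_eq_conv_conj)
  finally have "take (length w) (drop (length a) (b @ w)) = w" .
  moreover have "0 < length a" "length a < length (b @ w) - length w" using assms(2,3) by auto
  ultimately show False using assms(1) unfolding complete_return_def by blast
qed

text \<open>The longest palindromic suffix of \<open>x a\<close> is not a factor of \<open>x\<close>, since otherwise the
  complete return word ending with it would be a longer palindromic suffix.\<close>
lemma rich_if_complete_returns_palindromic:
  fixes v :: "nat \<Rightarrow> 'b"
  assumes complete_return_pal:
    "\<And>c p. is_inf_factor v c \<Longrightarrow> complete_return p c \<Longrightarrow> rev p = p \<Longrightarrow> rev c = c"
  shows "rich v"
proof -
  interpret involution id by unfold_locales simp
  have rev_eq: "rev = antimorph id" by (simp add: fun_eq_iff antimorph_def)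
  have G_0: "G (antimorph id) x = 0" for x :: "'b list"
  proof -
    have "letter_pairs x = {}" unfolding letter_pairs_def by simp
    then show ?thesis using G_eq_card_letter_pairs[of x] by simp
  qed
  have "defect (antimorph id) x = 0" if "is_inf_factor v x" for x
    using that
  proof (induction x rule: rev_induct)
    case Nil
    have "Pal (antimorph id) ([] :: 'b list) = {[]}" unfolding Pal_def by (auto simp: antimorph_def)
    then show ?case unfolding defect_def using G_0 by simp
  next
    case (snoc a x)
    have "is_inf_factor v x" using is_inf_factor_sublist[OF snoc.prems] by simp
    then have IH: "defect (antimorph id) x = 0" by (rule snoc.IH)
    have "suffix [a] (x @ [a]) \<and> rev [a] = [a]" by (simp add: suffix_def)
    moreover have "\<forall>q. suffix q (x @ [a]) \<and> rev q = q \<longrightarrow> length q < Suc (length (x @ [a]))"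
      using suffix_length_le le_imp_less_Suc by blast
    ultimately have "\<exists>q. (suffix q (x @ [a]) \<and> rev q = q) \<and>
        (\<forall>q'. suffix q' (x @ [a]) \<and> rev q' = q' \<longrightarrow> length q' \<le> length q)"
      by (rule Lattices_Big.ex_has_greatest_nat)
    then obtain q where q: "suffix q (x @ [a])" "rev q = q"
      and q_max: "\<forall>q'. suffix q' (x @ [a]) \<and> rev q' = q' \<longrightarrow> length q' \<le> length q"
      by (elim exE conjE)
    have "\<not> sublist q x"
    proof
      assume "sublist q x"
      then obtain c where c: "suffix c (x @ [a])" "complete_return q c"
        using repeated_suffix_imp_complete_return_suffix[OF q(1)] by blast
      have "is_inf_factor v c" using is_inf_factor_sublist[OF snoc.prems suffix_imp_sublist[OF c(1)]] .
      then have "rev c = c" using complete_return_pal[OF _ c(2) q(2)] by blast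
      then have "length c \<le> length q" using q_max c(1) by blast
      moreover have "length q < length c" using c(2) unfolding complete_return_def by blast
      ultimately show False by simp
    qed
    then have "q \<in> Pal (antimorph id) (x @ [a]) - Pal (antimorph id) x"
      using q unfolding Pal_snoc_new_iff by (simp add: rev_eq)
    then have "card (Pal (antimorph id) (x @ [a])) = card (Pal (antimorph id) x) + 1"
      by (rule card_Pal_snoc_new)
    then show ?case using IH unfolding defect_def G_0 by simp
  qed
  then show ?thesis unfolding rich_def rev_eq by blast
qed

section \<open>Words of finite defect\<close>

lemma finite_defect_imp_max_defect_factor:
  assumes "finite_defect \<Theta> u"
  shows "\<exists>f. is_inf_factor u f \<and> (\<forall>z. is_inf_factor u z \<longrightarrow> defect \<Theta> z \<le> defect \<Theta> f)"
proof -
  obtain K where K: "\<And>w. is_inf_factor u w \<Longrightarrow> defect \<Theta> w \<le> K"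
    using assms unfolding finite_defect_def by blast
  have "\<exists>n z. is_inf_factor u z \<and> n = nat (K - defect \<Theta> z)"
    by (rule exI[of _ "nat (K - defect \<Theta> [])"], rule exI[of _ "[]"])
       (simp add: is_inf_factor_def inf_factor_at_def)
  define n where "n = (LEAST n. \<exists>z. is_inf_factor u z \<and> n = nat (K - defect \<Theta> z))"
  obtain f where f: "is_inf_factor u f" "n = nat (K - defect \<Theta> f)"
    using LeastI_ex[OF \<open>\<exists>n z. _\<close>] unfolding n_def by blast
  have f_min: "n \<le> nat (K - defect \<Theta> z)" if "is_inf_factor u z" for z
    unfolding n_def using that by (intro Least_le) blast
  have "defect \<Theta> z \<le> defect \<Theta> f" if "is_inf_factor u z" for z
    using f_min[OF that] f(2) K[OF that] K[OF f(1)] by linarith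
  then show ?thesis using f(1) by blast
qed

context involution
begin

text \<open>Equal defect yields a palindromic suffix of \<open>c\<close> that is not a factor of \<open>butlast c\<close>.
  It is not shorter than \<open>p\<close>, for then it would be a prefix of \<open>p\<close>; so it begins with \<open>p\<close>,
  and the only occurrence of \<open>p\<close> it can start at is the first one.\<close>
lemma complete_return_palindromic_if_defect_eq:
  assumes cr: "complete_return p c" and pal: "\<Theta> p = p" "p \<noteq> []"
    and defect_eq: "defect \<Theta> (butlast c) = defect \<Theta> c"
  shows "\<Theta> c = c"
proof -
  from cr have pc: "prefix p c" and sc: "suffix p c" and lpc: "length p < length c"
    and no_inner: "\<And>k. 0 < k \<Longrightarrow> k < length c - length p \<Longrightarrow> take (length p) (drop k c) \<noteq> p"
    unfolding complete_return_def by auto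
  have "c \<noteq> []" using lpc by auto
  then obtain c' a where c: "c = c' @ [a]" by (metis append_butlast_last_id)
  have pc': "prefix p c'" using pc lpc c by (metis prefix_snoc nat_less_le)
  obtain zs where "c = zs @ p" using sc by (auto simp: suffix_def)
  then have "last (zs @ p) = a" using c by (metis last_snoc)
  then have "last p = a" using pal(2) by simp
  then have "a \<in> set c'" using set_mono_prefix[OF pc'] pal(2) last_in_set by blast
  moreover have "defect \<Theta> (c' @ [a]) = defect \<Theta> c'" using defect_eq c by simp
  ultimately obtain q where sq: "suffix q c" and pq: "\<Theta> q = q" and new: "\<not> sublist q c'"
    using defect_snoc_eq_imp_new_palindromic_suffix c by blast
  show ?thesis
  proof (cases "length q \<le> length p")
    case True
    then have "prefix q p" using suffix_length_suffix[OF sq sc] palindromic_suffix_imp_prefix pq pal(1)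
      by blast
    then show ?thesis using pc' new prefix_order.trans by blast
  next
    case False
    then have "prefix p q" using suffix_length_suffix[OF sc sq] palindromic_suffix_imp_prefix pq pal(1)
      by simp
    define k where "k = length c - length q"
    have dq: "drop k c = q" using sq unfolding k_def by (auto simp: suffix_def)
    then have "take (length p) (drop k c) = p" using \<open>prefix p q\<close> by (auto simp: prefix_def)
    moreover have "k < length c - length p" using False suffix_length_le[OF sq] unfolding k_def
      by linarith
    ultimately have "k = 0" using no_inner by blast
    then show ?thesis using dq pq by simp
  qed
qed

end

locale finite_defect_word = involution \<theta> for \<theta> :: "'a::finite \<Rightarrow> 'a" +
  fixes u :: "nat \<Rightarrow> 'a"
  assumes uniformly_recurrent: "uniformly_recurrent u"
    and finite_defect: "finite_defect (antimorph \<theta>) u"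
begin

definition max_defect_factor :: "'a list" where
  "max_defect_factor = (SOME f. is_inf_factor u f \<and>
     (\<forall>z. is_inf_factor u z \<longrightarrow> defect \<Theta> z \<le> defect \<Theta> f))"

lemma max_defect_factor:
  "is_inf_factor u max_defect_factor"
  "is_inf_factor u z \<Longrightarrow> defect \<Theta> z \<le> defect \<Theta> max_defect_factor"
  using someI_ex[OF finite_defect_imp_max_defect_factor[OF finite_defect]]
  unfolding max_defect_factor_def by blast+

text \<open>Long factors contain \<open>max_defect_factor\<close>, so by monotonicity their defect is maximal.\<close>
definition stable_length :: nat where
  "stable_length = Suc (SOME L. \<forall>z. is_inf_factor u z \<and> L \<le> length z \<longrightarrow> sublist max_defect_factor z)"

lemma stable_length_pos: "0 < stable_length"
  unfolding stable_length_def by simp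

lemma defect_long_factor:
  assumes "is_inf_factor u z" "stable_length \<le> length z"
  shows "defect \<Theta> z = defect \<Theta> max_defect_factor"
proof -
  have "sublist max_defect_factor z"
    using someI_ex[OF syndetic_sublist_long_factor[OF uniformly_recurrent_imp_syndetic
          [OF uniformly_recurrent max_defect_factor(1)]]] assms
    unfolding stable_length_def by simp
  then show ?thesis using defect_mono max_defect_factor(2)[OF assms(1)] by (meson antisym)
qed

lemma complete_return_to_long_palindrome_palindromic:
  assumes "is_inf_factor u c" "complete_return p c" "\<Theta> p = p" "stable_length \<le> length p"
  shows "\<Theta> c = c"
proof (rule complete_return_palindromic_if_defect_eq[OF assms(2,3)])
  show "p \<noteq> []" using assms(4) stable_length_pos by auto
  have "prefix p c" "length p < length c"
    using assms(2) unfolding complete_return_def by auto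
  then have "c \<noteq> []" by auto
  then obtain c' a where c: "c = c' @ [a]" by (metis append_butlast_last_id)
  have "prefix p c'" using \<open>prefix p c\<close> \<open>length p < length c\<close> c by (metis prefix_snoc nat_less_le)
  then have "stable_length \<le> length c'" using assms(4) prefix_length_le by (metis le_trans)
  moreover have "is_inf_factor u c'"
    using is_inf_factor_sublist[OF assms(1)] c by (metis sublist_append_rightI)
  ultimately have "defect \<Theta> c' = defect \<Theta> c"
    using defect_long_factor assms(1) c by simp
  then show "defect \<Theta> (butlast c) = defect \<Theta> c" using c by simp
qed

definition left_extension :: "'a list \<Rightarrow> bool" where
  "left_extension x \<longleftrightarrow> (\<forall>n. is_inf_factor u (x @ inf_factor_at u 0 n))"

lemma left_extension_factor: "left_extension x \<Longrightarrow> is_inf_factor u x"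
  unfolding left_extension_def by (metis append_Nil2 inf_factor_at_0)

lemma left_extension_suffix: "left_extension x \<Longrightarrow> suffix y x \<Longrightarrow> left_extension y"
  unfolding left_extension_def suffix_def using is_inf_factor_sublist
  by (metis append_assoc sublist_append_leftI)

text \<open>By recurrence each \<open>x \<cdot> u[0..n)\<close> has a left neighbour; one letter serves for
  infinitely many \<open>n\<close> and hence, by taking prefixes, for all.\<close>
lemma left_extension_Cons:
  assumes "left_extension x"
  shows "\<exists>a. left_extension (a # x)"
proof -
  have "\<exists>a. is_inf_factor u (a # x @ inf_factor_at u 0 n)" for n
  proof -
    define F where "F = x @ inf_factor_at u 0 n"
    have "infinite {i. inf_factor_at u i (length F) = F}"
      using uniformly_recurrent assms unfolding uniformly_recurrent_def recurrent_def left_extension_def F_def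
      by auto
    then obtain i where "i > 0" "inf_factor_at u i (length F) = F"
      using infinite_nat_iff_unbounded[THEN iffD1, rule_format, of _ 0] by blast
    then have "inf_factor_at u (i - 1) (Suc (length F)) = u (i - 1) # F"
      using inf_factor_at_Cons[of u "i - 1" "length F"] by simp
    then show ?thesis unfolding F_def by (metis is_inf_factor_inf_factor_at)
  qed
  then obtain A where A: "\<And>n. is_inf_factor u (A n # x @ inf_factor_at u 0 n)" by metis
  have "\<exists>a. infinite {n. A n = a}"
  proof (rule ccontr)
    assume "\<nexists>a. infinite {n. A n = a}"
    then have "finite (\<Union>a. {n. A n = a})" by simp
    moreover have "(\<Union>a. {n. A n = a}) = UNIV" by auto
    ultimately show False by simp
  qed
  then obtain a where a: "infinite {n. A n = a}" by blast
  have "is_inf_factor u ((a # x) @ inf_factor_at u 0 n)" for n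
  proof -
    obtain n' where n': "n \<le> n'" "A n' = a"
      using a unfolding infinite_nat_iff_unbounded_le by blast
    have "inf_factor_at u 0 n' = inf_factor_at u 0 n @ inf_factor_at u n (n' - n)"
      using inf_factor_at_add[of u 0 n "n' - n"] n' by simp
    then have "sublist (a # x @ inf_factor_at u 0 n) (A n' # x @ inf_factor_at u 0 n')"
      using n' by (metis append_Cons append_assoc sublist_append_rightI)
    then show ?thesis using is_inf_factor_sublist[OF A[of n']] by simp
  qed
  then show ?thesis unfolding left_extension_def by blast
qed

lemma ex_left_extension_length: "\<exists>x. left_extension x \<and> length x = m"
proof (induction m)
  case 0
  have "left_extension []" unfolding left_extension_def by simp
  then show ?case by auto
next
  case (Suc m)
  then obtain x where "left_extension x" "length x = m" by blast
  then show ?case using left_extension_Cons by fastforce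
qed

text \<open>Take a left extension so long that its last letter and all factors of length at most
  \<open>stable_length\<close> occur in it before the end.  Its new palindromic suffix is then not
  short, since all short factors occur earlier.\<close>
lemma long_palindromic_left_extension:
  "\<exists>w. \<Theta> w = w \<and> stable_length \<le> length w \<and> left_extension w"
proof -
  define S where "S = {q. length q \<le> stable_length \<and> is_inf_factor u q}"
  have "S \<subseteq> {xs. set xs \<subseteq> UNIV \<and> length xs \<le> stable_length}" unfolding S_def by auto
  moreover have "finite {xs. set xs \<subseteq> (UNIV :: 'a set) \<and> length xs \<le> stable_length}"
    by (rule finite_lists_length_le) simp
  ultimately have "finite S" by (rule finite_subset)
  moreover have "\<forall>F\<in>S. is_inf_factor u F" unfolding S_def by simp
  ultimately obtain L where L: "\<forall>F\<in>S. \<forall>z. is_inf_factor u z \<and> L \<le> length z \<longrightarrow> sublist F z"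
    using uniformly_recurrent_sublist_long_factor[OF uniformly_recurrent] by blast
  obtain x where x: "left_extension x" "length x = stable_length + L + 1"
    using ex_left_extension_length by blast
  have "x \<noteq> []" using x(2) by auto
  then obtain c' a where x_eq: "x = c' @ [a]" by (metis append_butlast_last_id)
  have "is_inf_factor u x" using left_extension_factor[OF x(1)] .
  then have factors: "is_inf_factor u c'" "is_inf_factor u [a]"
    using is_inf_factor_sublist x_eq by (metis sublist_append_rightI, metis sublist_append_leftI)
  have lengths: "length c' = stable_length + L" using x(2) x_eq by simp
  have "[a] \<in> S" using factors(2) stable_length_pos unfolding S_def by simp
  then have "sublist [a] c'" using L factors(1) lengths by auto
  then have "a \<in> set c'" using set_mono_sublist by fastforce
  moreover have "defect \<Theta> (c' @ [a]) = defect \<Theta> c'"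
    using defect_long_factor[OF \<open>is_inf_factor u x\<close>] defect_long_factor[OF factors(1)] x lengths x_eq
    by simp
  ultimately obtain q where "suffix q (c' @ [a])" "\<Theta> q = q" "\<not> sublist q c'"
    using defect_snoc_eq_imp_new_palindromic_suffix by blast
  then have q: "suffix q x" "\<Theta> q = q" "\<not> sublist q c'" using x_eq by simp_all
  have "q \<notin> S" using L q(3) factors(1) lengths by auto
  then have "stable_length \<le> length q"
    using is_inf_factor_sublist[OF \<open>is_inf_factor u x\<close> suffix_imp_sublist[OF q(1)]] unfolding S_def by simp
  then show ?thesis using q left_extension_suffix[OF x(1) q(1)] by blast
qed

end


section \<open>The derived word\<close>

locale derivation = finite_defect_word \<theta> u for \<theta> :: "'a::finite \<Rightarrow> 'a" and u +
  fixes w :: "'a list"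
  assumes palindrome: "\<Theta> w = w" and long: "stable_length \<le> length w" and left_ext: "left_extension w"
begin

text \<open>The word \<open>w u\<close> starts with an occurrence of \<open>w\<close> and, \<open>w\<close> being a left extension,
  has the same factors as \<open>u\<close>; it is cut into its successive complete return words to \<open>w\<close>.\<close>
definition wu :: "nat \<Rightarrow> 'a" where
  "wu n = (if n < length w then w ! n else u (n - length w))"

lemma inf_factor_at_wu_0: "inf_factor_at wu 0 n = take n (w @ inf_factor_at u 0 n)"
  by (rule nth_equalityI) (auto simp: wu_def nth_append)

lemma is_inf_factor_wu:
  assumes "is_inf_factor wu z"
  shows "is_inf_factor u z"
proof -
  obtain i where i: "inf_factor_at wu i (length z) = z" using assms unfolding is_inf_factor_def by blast
  have "sublist z (inf_factor_at wu 0 (i + length z))"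
    using sublist_inf_factor_at[of 0 i "length z" "i + length z" wu] i by simp
  also have "inf_factor_at wu 0 (i + length z) = take (i + length z) (w @ inf_factor_at u 0 (i + length z))"
    by (rule inf_factor_at_wu_0)
  finally have "sublist z (w @ inf_factor_at u 0 (i + length z))"
    by (metis sublist_order.order.trans sublist_take)
  moreover have "is_inf_factor u (w @ inf_factor_at u 0 (i + length z))"
    using left_ext unfolding left_extension_def by blast
  ultimately show ?thesis using is_inf_factor_sublist by blast
qed

lemma wu_shift[simp]: "wu (n + length w) = u n" by (simp add: wu_def)

lemma occurs_at_wu_shift: "occurs_at u F p \<Longrightarrow> occurs_at wu F (p + length w)"
  unfolding occurs_at_iff by (metis add.commute add.left_commute wu_shift)

abbreviation "occurs_w j \<equiv> occurs_at wu w j"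

lemma occurs_w_0: "occurs_w 0" unfolding occurs_at_iff by (simp add: wu_def)

lemma is_inf_factor_w: "is_inf_factor u w" using left_extension_factor[OF left_ext] .

lemma ex_occurs_w_gt: "\<exists>j>n. occurs_w j"
proof -
  have "infinite {i. inf_factor_at u i (length w) = w}"
    using uniformly_recurrent is_inf_factor_w unfolding uniformly_recurrent_def recurrent_def by blast
  then obtain p where "p > n" "occurs_at u w p"
    using infinite_nat_iff_unbounded[THEN iffD1, rule_format, of _ n] unfolding occurs_at_def by blast
  then show ?thesis using occurs_at_wu_shift by (intro exI[of _ "p + length w"]) auto
qed

primrec occ_w :: "nat \<Rightarrow> nat" where
  "occ_w 0 = 0"
| "occ_w (Suc n) = (LEAST j. occ_w n < j \<and> occurs_w j)"

declare occ_w.simps(2)[simp del]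

lemma occ_w_Suc: "occ_w n < occ_w (Suc n) \<and> occurs_w (occ_w (Suc n))"
  using LeastI_ex[OF ex_occurs_w_gt[of "occ_w n"]] by (simp add: occ_w.simps(2))

lemma occurs_w_occ_w: "occurs_w (occ_w n)"
  using occ_w_Suc occurs_w_0 by (cases n) auto

lemma occ_w_less_Suc: "occ_w n < occ_w (Suc n)"
  using occ_w_Suc by blast

lemma not_occurs_w_between: "occ_w n < k \<Longrightarrow> k < occ_w (Suc n) \<Longrightarrow> \<not> occurs_w k"
  using not_less_Least[of k "\<lambda>j. occ_w n < j \<and> occurs_w j"] by (auto simp: occ_w.simps(2))

lemma strict_mono_occ_w: "strict_mono occ_w"
  unfolding strict_mono_Suc_iff using occ_w_less_Suc by blast

lemma occ_w_less_iff: "occ_w i < occ_w j \<longleftrightarrow> i < j"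
  using strict_mono_less[OF strict_mono_occ_w] .

lemma occ_w_le_iff: "occ_w i \<le> occ_w j \<longleftrightarrow> i \<le> j"
  using strict_mono_less_eq[OF strict_mono_occ_w] .

lemma occ_w_add_le: "occ_w i + k \<le> occ_w (i + k)"
proof (induction k)
  case (Suc k)
  then show ?case using occ_w_less_Suc[of "i + k"] by simp
qed simp

lemma occ_w_Suc_eqI:
  assumes "occ_w n < y" "occurs_w y" "\<And>z. occ_w n < z \<Longrightarrow> z < y \<Longrightarrow> \<not> occurs_w z"
  shows "occ_w (Suc n) = y"
proof -
  have "occ_w (Suc n) \<le> y" unfolding occ_w.simps(2) using assms by (intro Least_le) auto
  moreover have "\<not> occ_w (Suc n) < y" using assms(3)[of "occ_w (Suc n)"] occ_w_Suc by blast
  ultimately show ?thesis by simp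
qed

lemma occ_w_cover: "\<exists>j. occ_w j \<le> q \<and> q < occ_w (Suc j)"
proof (induction q)
  case 0
  then show ?case using occ_w_less_Suc[of 0] by (intro exI[of _ 0]) simp
next
  case (Suc q)
  then obtain j where j: "occ_w j \<le> q" "q < occ_w (Suc j)" by blast
  show ?case
  proof (cases "Suc q < occ_w (Suc j)")
    case True
    then show ?thesis using j by (intro exI[of _ j]) simp
  next
    case False
    then have "Suc q = occ_w (Suc j)" using j by simp
    then show ?thesis using occ_w_less_Suc[of "Suc j"] by (intro exI[of _ "Suc j"]) simp
  qed
qed

lemma occurs_w_imp_occ_w:
  assumes "occurs_w q"
  shows "\<exists>j. q = occ_w j"
proof -
  obtain j where j: "occ_w j \<le> q" "q < occ_w (Suc j)" using occ_w_cover by blast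
  then have "q = occ_w j" using not_occurs_w_between[of j q] assms by (cases "occ_w j < q") auto
  then show ?thesis by blast
qed

definition return_w :: "nat \<Rightarrow> 'a list" where
  "return_w i = inf_factor_at wu (occ_w i) (occ_w (Suc i) - occ_w i)"

lemma return_w_append_w:
  "return_w i @ w = inf_factor_at wu (occ_w i) (occ_w (Suc i) - occ_w i + length w)"
proof -
  have "inf_factor_at wu (occ_w i + (occ_w (Suc i) - occ_w i)) (length w) = w"
    using occurs_w_occ_w[of "Suc i"] occ_w_less_Suc[of i] unfolding occurs_at_def by simp
  then show ?thesis unfolding return_w_def by (simp add: inf_factor_at_add)
qed

lemma return_w_not_Nil: "return_w i \<noteq> []"
  unfolding return_w_def using occ_w_less_Suc[of i]
  by (metis length_inf_factor_at less_numeral_extra(3) list.size(3) zero_less_diff)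

lemma complete_return_return_w: "complete_return w (return_w i @ w)"
proof -
  define d where "d = occ_w (Suc i) - occ_w i"
  have X: "return_w i @ w = inf_factor_at wu (occ_w i) (d + length w)"
    using return_w_append_w d_def by simp
  have "take (length w) (return_w i @ w) = w"
    using X occurs_w_occ_w[of i] unfolding occurs_at_def by (simp add: take_inf_factor_at)
  then have "prefix w (return_w i @ w)" by (metis take_is_prefix)
  moreover have "length w < length (return_w i @ w)" using return_w_not_Nil by simp
  moreover have "take (length w) (drop k (return_w i @ w)) \<noteq> w"
    if k: "0 < k" "k < length (return_w i @ w) - length w" for k
  proof
    assume "take (length w) (drop k (return_w i @ w)) = w"
    then have "occurs_w (occ_w i + k)"
      unfolding X occurs_at_def using k X take_drop_inf_factor_at[of k "length w" "d + length w" wu "occ_w i"]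
      by (simp add: d_def)
    moreover have "occ_w i < occ_w i + k" "occ_w i + k < occ_w (Suc i)" using k X d_def by auto
    ultimately show False using not_occurs_w_between by blast
  qed
  ultimately show ?thesis unfolding complete_return_def by (simp add: suffix_def)
qed

lemma return_w_palindrome: "\<Theta> (return_w i @ w) = return_w i @ w"
proof (rule complete_return_to_long_palindrome_palindromic[OF _ complete_return_return_w palindrome long])
  show "is_inf_factor u (return_w i @ w)"
    unfolding return_w_append_w by (rule is_inf_factor_wu[OF is_inf_factor_inf_factor_at])
qed

definition der :: "nat \<Rightarrow> nat" where
  "der i = to_nat (return_w i)"

text \<open>A return word \<open>r\<close> is mapped to its conjugate \<open>r'\<close> with \<open>w r' = r w\<close>: concatenating
  these reads \<open>w u\<close> from position \<open>|w|\<close> on, i.e. \<open>u\<close>.\<close>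
definition der_morph :: "nat \<Rightarrow> 'a list" where
  "der_morph c = drop (length w) (from_nat c @ w)"

definition expand :: "nat list \<Rightarrow> 'a list" where
  "expand cs = concat (map from_nat cs) @ w"

lemma from_nat_der[simp]: "from_nat (der i) = return_w i"
  unfolding der_def by simp

lemma concat_return_w:
  "concat (map from_nat (map der [i..<i+m])) = inf_factor_at wu (occ_w i) (occ_w (i + m) - occ_w i)"
proof (induction m)
  case (Suc m)
  have "concat (map from_nat (map der [i..<i + Suc m]))
      = inf_factor_at wu (occ_w i) (occ_w (i + m) - occ_w i) @ return_w (i + m)"
    using Suc by simp
  also have "\<dots> = inf_factor_at wu (occ_w i)
      (occ_w (i + m) - occ_w i + (occ_w (Suc (i + m)) - occ_w (i + m)))"
    using inf_factor_at_add[of wu "occ_w i" "occ_w (i + m) - occ_w i"] occ_w_le_iff[of i "i + m"]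
    by (simp add: return_w_def)
  also have "occ_w (i + m) - occ_w i + (occ_w (Suc (i + m)) - occ_w (i + m)) = occ_w (i + Suc m) - occ_w i"
    using occ_w_le_iff[of i "i + m"] occ_w_less_Suc[of "i + m"] by simp
  finally show ?case .
qed simp

lemma expand_der:
  "expand (map der [i..<i+m]) = inf_factor_at wu (occ_w i) (occ_w (i + m) - occ_w i + length w)"
proof -
  have "inf_factor_at wu (occ_w i + (occ_w (i + m) - occ_w i)) (length w) = w"
    using occurs_w_occ_w[of "i + m"] occ_w_le_iff[of i "i + m"] unfolding occurs_at_def by simp
  then show ?thesis unfolding expand_def concat_return_w by (simp add: inf_factor_at_add)
qed

lemma morph_prefix_der: "morph_prefix der_morph der n = inf_factor_at u 0 (occ_w n)"
proof (induction n)
  case (Suc n)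
  have "der_morph (der n) = drop (length w) (return_w n @ w)" by (simp add: der_morph_def)
  also have "\<dots> = inf_factor_at u (occ_w n) (occ_w (Suc n) - occ_w n)"
    unfolding return_w_append_w by (rule nth_equalityI) (auto simp: wu_def)
  finally have "morph_prefix der_morph der (Suc n)
      = inf_factor_at u 0 (occ_w n) @ inf_factor_at u (occ_w n) (occ_w (Suc n) - occ_w n)"
    using Suc by (simp add: morph_prefix_def)
  then show ?case
    using occ_w_less_Suc[of n] inf_factor_at_add[of u 0 "occ_w n" "occ_w (Suc n) - occ_w n"] by simp
qed (simp add: morph_prefix_def)

lemma is_morph_image_der: "is_morph_image der_morph der u"
  unfolding is_morph_image_def morph_prefix_der using occ_w_add_le[of 0] by auto

text \<open>An occurrence in \<open>w u\<close> of the expansion of \<open>m\<close> consecutive letters of the derived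
  word is aligned with the cutting into return words, since the occurrences of \<open>w\<close> inside
  it match up.\<close>
lemma occurrence_of_expansion:
  assumes oc: "occurs_at wu (expand (map der [i..<i+m])) q"
  shows "\<exists>j. q = occ_w j \<and> (\<forall>k\<le>m. occ_w (j + k) = q + (occ_w (i + k) - occ_w i)) \<and>
     (\<forall>d < occ_w (i + m) - occ_w i + length w. wu (q + d) = wu (occ_w i + d))"
proof -
  define F where "F = expand (map der [i..<i+m])"
  have lenF: "length F = occ_w (i + m) - occ_w i + length w" unfolding F_def expand_der by simp
  have eqv: "wu (q + d) = wu (occ_w i + d)" if "d < length F" for d
    using oc that unfolding occurs_at_iff F_def[symmetric] by (simp add: F_def expand_der)
  have tr: "occurs_w (q + e) \<longleftrightarrow> occurs_w (occ_w i + e)" if "e + length w \<le> length F" for e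
  proof -
    have "\<forall>k<length w. wu (q + e + k) = wu (occ_w i + e + k)"
      using eqv[of "e + _"] that by (simp add: add.assoc)
    then show ?thesis unfolding occurs_at_iff by simp
  qed
  have "occurs_w q" using tr[of 0] occurs_w_occ_w[of i] lenF by simp
  then obtain j where qj: "q = occ_w j" using occurs_w_imp_occ_w by blast
  have "occ_w (j + k) = q + (occ_w (i + k) - occ_w i)" if "k \<le> m" for k
    using that
  proof (induction k)
    case (Suc k)
    then have IH: "occ_w (j + k) = q + (occ_w (i + k) - occ_w i)" by simp
    have m1: "occ_w i \<le> occ_w (i + k)" "occ_w (i + k) < occ_w (Suc (i + k))"
      "occ_w (Suc (i + k)) \<le> occ_w (i + m)"
      using occ_w_le_iff occ_w_less_Suc Suc.prems by auto
    define y where "y = q + (occ_w (Suc (i + k)) - occ_w i)"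
    have "occ_w (Suc (j + k)) = y"
    proof (rule occ_w_Suc_eqI)
      show "occ_w (j + k) < y" using IH m1 y_def by simp
      show "occurs_w y"
        using tr[of "occ_w (Suc (i + k)) - occ_w i"] occurs_w_occ_w[of "Suc (i + k)"] m1 lenF y_def
        by simp
      fix z assume z: "occ_w (j + k) < z" "z < y"
      define e where "e = z - q"
      have "z = q + e" "occ_w (i + k) < occ_w i + e" "occ_w i + e < occ_w (Suc (i + k))"
        "e + length w \<le> length F"
        using z IH y_def m1 e_def lenF by auto
      then show "\<not> occurs_w z" using tr[of e] not_occurs_w_between[of "i + k" "occ_w i + e"] by simp
    qed
    then show ?case using y_def by simp
  qed (simp add: qj)
  then show ?thesis using qj eqv lenF by auto
qed

lemma occurrence_of_expansion_der:
  assumes oc: "occurs_at wu (expand (map der [i..<i+m])) q"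
  shows "\<exists>j. q = occ_w j \<and> occ_w (j + m) = q + (occ_w (i + m) - occ_w i) \<and>
    map der [j..<j+m] = map der [i..<i+m]"
proof -
  obtain j where qj: "q = occ_w j"
    and aligned: "\<And>k. k \<le> m \<Longrightarrow> occ_w (j + k) = q + (occ_w (i + k) - occ_w i)"
    and eqv: "\<And>d. d < occ_w (i + m) - occ_w i + length w \<Longrightarrow> wu (q + d) = wu (occ_w i + d)"
    using occurrence_of_expansion[OF oc] by blast
  have "return_w (j + k) = return_w (i + k)" if k: "k < m" for k
  proof -
    have m1: "occ_w i \<le> occ_w (i + k)" "occ_w (i + k) < occ_w (Suc (i + k))"
      "occ_w (Suc (i + k)) \<le> occ_w (i + m)"
      using occ_w_le_iff occ_w_less_Suc k by auto
    have "return_w (j + k)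
        = inf_factor_at wu (q + (occ_w (i + k) - occ_w i)) (occ_w (Suc (i + k)) - occ_w (i + k))"
      unfolding return_w_def using aligned[of k] aligned[of "Suc k"] k m1 by simp
    also have "\<dots> = return_w (i + k)"
      unfolding return_w_def
    proof (rule inf_factor_at_cong)
      fix d assume "d < occ_w (Suc (i + k)) - occ_w (i + k)"
      then have "occ_w (i + k) - occ_w i + d < occ_w (i + m) - occ_w i + length w" using m1 by linarith
      then show "wu (q + (occ_w (i + k) - occ_w i) + d) = wu (occ_w (i + k) + d)"
        using eqv[of "occ_w (i + k) - occ_w i + d"] m1 by (simp add: add.assoc)
    qed
    finally show ?thesis .
  qed
  then have "map der [j..<j+m] = map der [i..<i+m]" by (intro nth_equalityI) (auto simp: der_def)
  then show ?thesis using qj aligned[of m] by blast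
qed

lemma syndetic_der:
  assumes "is_inf_factor der x"
  shows "syndetic der x"
proof -
  define m where "m = length x"
  obtain i where xi: "x = map der [i..<i + m]"
    using assms unfolding is_inf_factor_def inf_factor_at_def m_def by metis
  define F where "F = expand (map der [i..<i + m])"
  have "is_inf_factor u F"
    unfolding F_def expand_der using is_inf_factor_wu is_inf_factor_inf_factor_at by blast
  then obtain R where R: "\<And>a. \<exists>p. a \<le> p \<and> p \<le> a + R \<and> occurs_at u F p"
    using uniformly_recurrent_imp_syndetic[OF uniformly_recurrent] unfolding syndetic_def by blast
  have "\<exists>b. a \<le> b \<and> b \<le> a + (R + length w) \<and> occurs_at der x b" for a
  proof -
    obtain p where p: "occ_w a \<le> p" "p \<le> occ_w a + R" "occurs_at u F p" using R by blast
    obtain b where b: "p + length w = occ_w b" "map der [b..<b+m] = map der [i..<i+m]"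
      using occurrence_of_expansion_der occurs_at_wu_shift[OF p(3)] unfolding F_def by blast
    have "a \<le> b" using b(1) p(1) occ_w_le_iff[of a b] by simp
    then have "occ_w a + (b - a) \<le> occ_w b" using occ_w_add_le[of a "b - a"] by simp
    then have "b \<le> a + (R + length w)" using b(1) p(2) \<open>a \<le> b\<close> by linarith
    moreover have "occurs_at der x b"
      unfolding occurs_at_def inf_factor_at_def m_def[symmetric] using b(2) xi by simp
    ultimately show ?thesis using \<open>a \<le> b\<close> by blast
  qed
  then show ?thesis unfolding syndetic_def by blast
qed

lemma occ_w_gap_bound: "\<exists>G. \<forall>i. occ_w (Suc i) - occ_w i \<le> G"
proof -
  obtain R where R: "\<And>a. \<exists>p. a \<le> p \<and> p \<le> a + R \<and> occurs_at u w p"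
    using uniformly_recurrent_imp_syndetic[OF uniformly_recurrent is_inf_factor_w]
    unfolding syndetic_def by blast
  have "occ_w (Suc i) - occ_w i \<le> Suc R + length w" for i
  proof -
    obtain p where p: "Suc (occ_w i) \<le> p" "p \<le> Suc (occ_w i) + R" "occurs_at u w p" using R by blast
    have "occ_w (Suc i) \<le> p + length w"
      unfolding occ_w.simps(2) using occurs_at_wu_shift[OF p(3)] p(1) by (intro Least_le) simp
    then show ?thesis using p(2) by simp
  qed
  then show ?thesis by blast
qed

lemma finite_range_der: "finite (range der)"
proof -
  obtain G where G: "\<And>i. occ_w (Suc i) - occ_w i \<le> G" using occ_w_gap_bound by blast
  have "range der \<subseteq> to_nat ` {xs. set xs \<subseteq> (UNIV :: 'a set) \<and> length xs \<le> G}"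
    unfolding der_def return_w_def using G by auto
  moreover have "finite (to_nat ` {xs. set xs \<subseteq> (UNIV :: 'a set) \<and> length xs \<le> G})"
    by (rule finite_imageI, rule finite_lists_length_le) simp
  ultimately show ?thesis by (rule finite_subset)
qed

lemma uniformly_recurrent_der: "uniformly_recurrent der"
  using syndetic_imp_uniformly_recurrent[OF syndetic_der finite_range_der] .

definition return_code :: "nat \<Rightarrow> bool" where
  "return_code c \<longleftrightarrow> (from_nat c :: 'a list) \<noteq> [] \<and> complete_return w (from_nat c @ w) \<and>
     to_nat (from_nat c :: 'a list) = c \<and> \<Theta> (from_nat c @ w) = from_nat c @ w"

lemma return_code_der: "return_code (der i)"
  using return_w_not_Nil complete_return_return_w return_w_palindrome
  unfolding return_code_def by (simp add: der_def)

lemma expand_Cons: "expand (c # cs) = from_nat c @ expand cs"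
  by (simp add: expand_def)

lemma length_expand: "length w \<le> length (expand cs)"
  by (simp add: expand_def)

lemma prefix_expand: "\<forall>c\<in>set cs. return_code c \<Longrightarrow> prefix w (expand cs)"
proof (induction cs)
  case (Cons c cs)
  have "prefix w (from_nat c @ w)"
    using Cons.prems unfolding return_code_def complete_return_def by simp
  moreover have "prefix (from_nat c @ w) (from_nat c @ expand cs)" using Cons by simp
  ultimately show ?case unfolding expand_Cons using prefix_order.trans by blast
qed (simp add: expand_def)

lemma antimorph_expand: "\<forall>c\<in>set cs. return_code c \<Longrightarrow> \<Theta> (expand cs) = expand (rev cs)"
proof (induction cs)
  case (Cons c cs)
  have "\<Theta> (from_nat c @ w) = from_nat c @ w" using Cons.prems unfolding return_code_def by simp
  then have "w @ \<Theta> (from_nat c) = from_nat c @ w" using palindrome by (metis antimorph_append)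
  then show ?case using Cons by (simp add: expand_def)
qed (simp add: expand_def palindrome)

lemma length_expand_Cons:
  assumes "return_code c"
  shows "length w < length (expand (c # cs))"
proof -
  have "from_nat c \<noteq> ([] :: 'a list)" using assms unfolding return_code_def by simp
  then have "0 < length (from_nat c :: 'a list)" by simp
  then show ?thesis using length_expand[of cs] unfolding expand_Cons length_append by linarith
qed

lemma expand_inj:
  assumes "\<forall>c\<in>set xs. return_code c" "\<forall>c\<in>set ys. return_code c" "expand xs = expand ys"
  shows "xs = ys"
  using assms
proof (induction xs arbitrary: ys)
  case Nil
  show ?case
  proof (cases ys)
    case (Cons y ys')
    then have "length w < length (expand ys)" using Nil.prems length_expand_Cons by simp
    then show ?thesis using Nil.prems by (simp add: expand_def)
  qed simp
next
  case (Cons x xs)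
  have "ys \<noteq> []"
  proof
    assume "ys = []"
    then have "length (expand (x # xs)) = length w" using Cons.prems by (simp add: expand_def)
    then show False using length_expand_Cons Cons.prems by (metis less_irrefl list.set_intros(1))
  qed
  then obtain y ys' where ys: "ys = y # ys'" by (cases ys) auto
  define a :: "'a list" where "a = from_nat x"
  define b :: "'a list" where "b = from_nat y"
  have codes: "return_code x" "\<forall>c\<in>set xs. return_code c" "return_code y" "\<forall>c\<in>set ys'. return_code c"
    using Cons.prems ys by auto
  obtain s where s: "expand xs = w @ s" using prefix_expand[OF codes(2)] by (auto simp: prefix_def)
  obtain r where r: "expand ys' = w @ r" using prefix_expand[OF codes(4)] by (auto simp: prefix_def)
  have eq: "a @ expand xs = b @ expand ys'"
    using Cons.prems ys unfolding a_def b_def by (simp add: expand_Cons)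
  then have "a @ w @ s = b @ w @ r" using s r by simp
  moreover have "a \<noteq> []" "b \<noteq> []" "complete_return w (a @ w)" "complete_return w (b @ w)"
    using codes unfolding return_code_def a_def b_def by auto
  ultimately have "\<not> length a < length b" "\<not> length b < length a"
    using complete_return_prefix_code[of w b a s r] complete_return_prefix_code[of w a b r s] by auto
  then have "a = b" "expand xs = expand ys'" using eq by auto
  moreover have "x = y" using \<open>a = b\<close> codes(1,3) unfolding return_code_def a_def b_def by metis
  ultimately show ?case using Cons.IH codes(2,4) ys by blast
qed

lemma occurrence_of_expansion_inside:
  assumes "occurs_at wu (expand (map der [i..<i + l])) (occ_w i + k)" "0 < k"
    and "k < occ_w (i + m) - occ_w (i + l)"
  shows "\<exists>j. i < j \<and> j + l < i + m \<and> map der [j..<j + l] = map der [i..<i + l]"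
proof -
  obtain j where j: "occ_w i + k = occ_w j"
    "occ_w (j + l) = occ_w i + k + (occ_w (i + l) - occ_w i)" "map der [j..<j + l] = map der [i..<i + l]"
    using occurrence_of_expansion_der[OF assms(1)] by metis
  have "i < j" using j(1) assms(2) occ_w_less_iff by (metis less_add_same_cancel1)
  moreover have "occ_w i \<le> occ_w (i + l)" using occ_w_le_iff by simp
  then have "occ_w (j + l) < occ_w (i + m)" using j(2) assms(3) by simp
  then have "j + l < i + m" using occ_w_less_iff by simp
  ultimately show ?thesis using j(3) by blast
qed

lemma complete_return_expand:
  assumes "is_inf_factor der c" "complete_return p c"
  shows "complete_return (expand p) (expand c)"
proof -
  define m where "m = length c"
  define l where "l = length p"
  obtain i where ci: "inf_factor_at der i m = c" using assms(1) unfolding is_inf_factor_def m_def by blast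
  from assms(2) have pc: "prefix p c" and sc: "suffix p c" and lm: "l < m"
    and no_inner: "\<And>k. 0 < k \<Longrightarrow> k < m - l \<Longrightarrow> take l (drop k c) \<noteq> p"
    unfolding complete_return_def l_def m_def by auto
  define i' where "i' = i + (m - l)"
  have p1: "p = map der [i..<i + l]"
    using prefix_inf_factor_at[of p der i m] pc ci unfolding l_def by (simp add: inf_factor_at_def)
  have p2: "p = map der [i'..<i' + l]"
    using suffix_inf_factor_at[of p der i m] sc ci unfolding l_def i'_def by (simp add: inf_factor_at_def)
  have c: "c = map der [i..<i + m]" using ci by (simp add: inf_factor_at_def)
  have Pc: "expand c = inf_factor_at wu (occ_w i) (occ_w (i + m) - occ_w i + length w)"
    using expand_der c by simp
  have Pp1: "expand p = inf_factor_at wu (occ_w i) (occ_w (i + l) - occ_w i + length w)"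
    using expand_der p1 by simp
  have "i' + l = i + m" using i'_def lm by simp
  then have Pp2: "expand p = inf_factor_at wu (occ_w i') (occ_w (i + m) - occ_w i' + length w)"
    using expand_der[of i' l] p2 by simp
  have mo: "occ_w i \<le> occ_w (i + l)" "occ_w (i + l) < occ_w (i + m)" "occ_w i \<le> occ_w i'"
    "occ_w i' \<le> occ_w (i + m)"
    using occ_w_le_iff occ_w_less_iff lm i'_def by auto
  show ?thesis
    unfolding complete_return_def
  proof (intro conjI allI impI)
    have "take (length (expand p)) (expand c) = expand p"
      unfolding Pc Pp1 using mo by (simp add: take_inf_factor_at)
    then show "prefix (expand p) (expand c)" by (metis take_is_prefix)
    have "expand c = inf_factor_at wu (occ_w i) (occ_w i' - occ_w i) @ expand p"
      unfolding Pc Pp2 using mo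
        inf_factor_at_add[of wu "occ_w i" "occ_w i' - occ_w i" "occ_w (i + m) - occ_w i' + length w"]
      by simp
    then show "suffix (expand p) (expand c)" by (simp add: suffix_def)
    show "length (expand p) < length (expand c)" unfolding Pc Pp1 using mo by simp
  next
    fix k assume k: "0 < k \<and> k < length (expand c) - length (expand p)"
    show "take (length (expand p)) (drop k (expand c)) \<noteq> expand p"
    proof
      assume inner: "take (length (expand p)) (drop k (expand c)) = expand p"
      have "length (expand c) = occ_w (i + m) - occ_w i + length w" using Pc by simp
      then have "k + length (expand p) \<le> occ_w (i + m) - occ_w i + length w" using k by linarith
      then have "take (length (expand p)) (drop k (expand c))
          = inf_factor_at wu (occ_w i + k) (length (expand p))"
        unfolding Pc by (rule take_drop_inf_factor_at)
      then have "occurs_at wu (expand (map der [i..<i + l])) (occ_w i + k)"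
        using inner p1 unfolding occurs_at_def by simp
      moreover have "k < occ_w (i + m) - occ_w (i + l)" using k unfolding Pc Pp1 using mo by simp
      ultimately obtain j where ij: "i < j" and jl: "j + l < i + m" and j: "map der [j..<j + l] = p"
        using occurrence_of_expansion_inside k p1 by blast
      define k' where "k' = j - i"
      have "k' + l \<le> m" using jl ij k'_def by linarith
      then have "take l (drop k' c) = inf_factor_at der (i + k') l"
        using ci take_drop_inf_factor_at[of k' l m der i] by simp
      also have "\<dots> = p" using ij j k'_def by (simp add: inf_factor_at_def)
      moreover have "0 < k'" "k' < m - l" using ij jl k'_def by linarith+
      ultimately show False using no_inner[of k'] by simp
    qed
  qed
qed

lemma der_complete_return_palindromic:
  assumes fc: "is_inf_factor der c" and cr: "complete_return p c" and "rev p = p"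
  shows "rev c = c"
proof (cases "p = []")
  case True
  have "length c \<le> 1"
  proof (rule ccontr)
    assume "\<not> length c \<le> 1"
    then have "0 < (1::nat)" "1 < length c - length p" using True by auto
    then show False using cr True unfolding complete_return_def by auto
  qed
  then show ?thesis by (cases c) auto
next
  case False
  define m where "m = length c"
  obtain i where "inf_factor_at der i m = c" using fc unfolding is_inf_factor_def m_def by blast
  then have c: "c = map der [i..<i + m]" by (simp add: inf_factor_at_def)
  then have codes_c: "\<forall>x\<in>set c. return_code x" using return_code_der by simp
  have "prefix p c" using cr unfolding complete_return_def by simp
  then have codes_p: "\<forall>x\<in>set p. return_code x" using codes_c set_mono_prefix by blast
  have "\<Theta> (expand c) = expand c"
  proof (rule complete_return_to_long_palindrome_palindromic)
    show "is_inf_factor u (expand c)"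
      unfolding c expand_der by (rule is_inf_factor_wu[OF is_inf_factor_inf_factor_at])
    show "complete_return (expand p) (expand c)" using complete_return_expand fc cr .
    show "\<Theta> (expand p) = expand p" using antimorph_expand[OF codes_p] \<open>rev p = p\<close> by simp
    show "stable_length \<le> length (expand p)" using length_expand[of p] long by simp
  qed
  then have "expand (rev c) = expand c" using antimorph_expand[OF codes_c] by simp
  then show ?thesis using expand_inj[of "rev c" c] codes_c by simp
qed

end


theorem theorem2:
  fixes \<Theta> :: "'a::finite list \<Rightarrow> 'a list" and u :: "nat \<Rightarrow> 'a"
  assumes "invol_antimorphism \<Theta>"
    and "uniformly_recurrent u"
    and "finite_defect \<Theta> u"
  shows "\<exists>(B::nat set) (\<phi>::nat \<Rightarrow> 'a list) (v::nat \<Rightarrow> nat).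
           finite B \<and> (\<forall>n. v n \<in> B) \<and> uniformly_recurrent v \<and>
           is_morph_image \<phi> v u \<and> rich v"
proof -
  obtain \<theta> where "\<forall>a. \<theta> (\<theta> a) = a" "\<Theta> = antimorph \<theta>"
    using invol_antimorphism_eq_antimorph[OF assms(1)] by blast
  then interpret finite_defect_word \<theta> u
    using assms(2,3) by unfold_locales simp_all
  obtain w where "antimorph \<theta> w = w" "stable_length \<le> length w" "left_extension w"
    using long_palindromic_left_extension by blast
  then interpret derivation \<theta> u w
    by unfold_locales
  have "rich der"
    using der_complete_return_palindromic by (rule rich_if_complete_returns_palindromic)
  then show ?thesis
    using finite_range_der uniformly_recurrent_der is_morph_image_der by blast
qed

end
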